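(* For any graph $G$, $\gamma_{oidR}(G)\le 2\gamma_{oiR}(G)$, with equality if and only if $G=\overline{K_n}$ (the edgeless graph on $n$ vertices).
   Context: Graphs are finite and simple. A DRD function of $G$ is $f:V(G)\to\{0,1,2,3\}$ such that every vertex with value $0$ has a neighbor with value $3$ or two neighbors with value $2$, and every vertex with value $1$ has a neighbor with value at least $2$; it is an OIDRD function if the set of vertices with value $0$ is independent, and $\gamma_{oidR}(G)$ is the minimum weight $\sum_v f(v)$ of an OIDRD function. A Roman dominating function is $f:V(G)\to\{0,1,2\}$ such that every vertex with value $0$ has a neighbor with value $2$; it is an outer independent Roman dominating function (OIRD function) if the set of vertices with value $0$ is independent, and $\gamma_{oiR}(G)$ is the minimum weight of an OIRD function. *)

theory Defs
  imports Main
begin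

definition simple_graph :: "'a set \<Rightarrow> ('a \<Rightarrow> 'a \<Rightarrow> bool) \<Rightarrow> bool" where
  "simple_graph V E \<longleftrightarrow> finite V \<and> (\<forall>u v. E u v \<longrightarrow> u \<in> V \<and> v \<in> V)
     \<and> (\<forall>u v. E u v \<longrightarrow> E v u) \<and> (\<forall>v. \<not> E v v)"

definition drd :: "'a set \<Rightarrow> ('a \<Rightarrow> 'a \<Rightarrow> bool) \<Rightarrow> ('a \<Rightarrow> nat) \<Rightarrow> bool" where
  "drd V E f \<longleftrightarrow> (\<forall>v\<in>V. f v \<le> 3
     \<and> (f v = 0 \<longrightarrow> (\<exists>u\<in>V. E v u \<and> f u = 3)
                   \<or> (\<exists>u\<in>V. \<exists>w\<in>V. u \<noteq> w \<and> E v u \<and> E v w \<and> f u = 2 \<and> f w = 2))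
     \<and> (f v = 1 \<longrightarrow> (\<exists>u\<in>V. E v u \<and> f u \<ge> 2)))"

definition zeros_independent :: "'a set \<Rightarrow> ('a \<Rightarrow> 'a \<Rightarrow> bool) \<Rightarrow> ('a \<Rightarrow> nat) \<Rightarrow> bool" where
  "zeros_independent V E f \<longleftrightarrow> (\<forall>u\<in>V. \<forall>w\<in>V. f u = 0 \<and> f w = 0 \<longrightarrow> \<not> E u w)"

definition oidrd :: "'a set \<Rightarrow> ('a \<Rightarrow> 'a \<Rightarrow> bool) \<Rightarrow> ('a \<Rightarrow> nat) \<Rightarrow> bool" where
  "oidrd V E f \<longleftrightarrow> drd V E f \<and> zeros_independent V E f"

definition rdf :: "'a set \<Rightarrow> ('a \<Rightarrow> 'a \<Rightarrow> bool) \<Rightarrow> ('a \<Rightarrow> nat) \<Rightarrow> bool" where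
  "rdf V E f \<longleftrightarrow> (\<forall>v\<in>V. f v \<le> 2 \<and> (f v = 0 \<longrightarrow> (\<exists>u\<in>V. E v u \<and> f u = 2)))"

definition oird :: "'a set \<Rightarrow> ('a \<Rightarrow> 'a \<Rightarrow> bool) \<Rightarrow> ('a \<Rightarrow> nat) \<Rightarrow> bool" where
  "oird V E f \<longleftrightarrow> rdf V E f \<and> zeros_independent V E f"

definition gamma_oidR :: "'a set \<Rightarrow> ('a \<Rightarrow> 'a \<Rightarrow> bool) \<Rightarrow> nat" where
  "gamma_oidR V E = (LEAST k. \<exists>f. oidrd V E f \<and> sum f V = k)"

definition gamma_oiR :: "'a set \<Rightarrow> ('a \<Rightarrow> 'a \<Rightarrow> bool) \<Rightarrow> nat" where
  "gamma_oiR V E = (LEAST k. \<exists>f. oird V E f \<and> sum f V = k)"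

end

theory Submission
  imports Defs
begin

text \<open>Replacing the values 1 and 2 of a minimum outer-independent Roman dominating
function f by 2 and 3 gives an outer-independent double Roman dominating function: the
zeros and their independence are unchanged, and every 0 now sees a 3. Its weight is at most
twice that of f, and strictly less if f takes the value 2. On an edgeless graph every
vertex needs a value of at least 2 in a double Roman function, while the constant 1 is
Roman, so equality holds. If there is an edge ab and a minimum f has no 2, then f is
constantly 1 and f(a := 2, b := 0) is a minimum function with a 2, so the inequality is
strict.\<close>

lemma oird_const: "0 < c \<Longrightarrow> c \<le> 2 \<Longrightarrow> oird V E (\<lambda>_. c)"
  unfolding oird_def rdf_def zeros_independent_def by auto

lemma gamma_oiR_le: "oird V E f \<Longrightarrow> gamma_oiR V E \<le> sum f V"
  unfolding gamma_oiR_def by (rule Least_le) blast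

lemma gamma_oiR_attained: "\<exists>f. oird V E f \<and> sum f V = gamma_oiR V E"
proof -
  have "oird V E (\<lambda>_. 2)"
    by (rule oird_const) simp_all
  then show ?thesis
    unfolding gamma_oiR_def by - (rule LeastI_ex, blast)
qed

lemma gamma_oidR_le: "oidrd V E g \<Longrightarrow> gamma_oidR V E \<le> sum g V"
  unfolding gamma_oidR_def by (rule Least_le) blast

definition double_rdf :: "('a \<Rightarrow> nat) \<Rightarrow> 'a \<Rightarrow> nat" where
  "double_rdf f v = (if f v = 2 then 3 else 2 * f v)"

lemma double_rdf_le: "double_rdf f v \<le> 2 * f v"
  unfolding double_rdf_def by auto

lemma double_rdf_less: "f v = 2 \<Longrightarrow> double_rdf f v < 2 * f v"
  unfolding double_rdf_def by auto

lemma oidrd_double_rdf: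
  assumes "oird V E f"
  shows "oidrd V E (double_rdf f)"
proof -
  have rdf: "\<forall>v\<in>V. f v \<le> 2 \<and> (f v = 0 \<longrightarrow> (\<exists>u\<in>V. E v u \<and> f u = 2))"
    and indep: "zeros_independent V E f"
    using assms unfolding oird_def rdf_def by auto
  have zero_iff: "double_rdf f v = 0 \<longleftrightarrow> f v = 0"
    and three: "f v = 2 \<Longrightarrow> double_rdf f v = 3"
    and not_one: "double_rdf f v \<noteq> 1" for v
    unfolding double_rdf_def by auto
  have "double_rdf f v \<le> 3" if "v \<in> V" for v
    using rdf that unfolding double_rdf_def by auto
  moreover have "\<exists>u\<in>V. E v u \<and> double_rdf f u = 3" if "v \<in> V" "double_rdf f v = 0" for v
    using rdf that zero_iff three by blast
  moreover have "zeros_independent V E (double_rdf f)"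
    using indep zero_iff unfolding zeros_independent_def by simp
  ultimately show ?thesis
    using not_one unfolding oidrd_def drd_def by blast
qed

lemma gamma_oidR_attained: "\<exists>g. oidrd V E g \<and> sum g V = gamma_oidR V E"
proof -
  obtain f where "oird V E f"
    using gamma_oiR_attained by blast
  then have "oidrd V E (double_rdf f)"
    by (rule oidrd_double_rdf)
  then show ?thesis
    unfolding gamma_oidR_def by - (rule LeastI_ex, blast)
qed

lemma gamma_oidR_le_twice_weight:
  assumes "oird V E f"
  shows "gamma_oidR V E \<le> 2 * sum f V"
proof -
  have "gamma_oidR V E \<le> sum (double_rdf f) V"
    using gamma_oidR_le[OF oidrd_double_rdf[OF assms]] .
  also have "\<dots> \<le> sum (\<lambda>v. 2 * f v) V"
    by (rule sum_mono) (rule double_rdf_le)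
  finally show ?thesis by (simp add: sum_distrib_left)
qed

lemma gamma_oidR_less_twice_weight:
  assumes "finite V" "oird V E f" "v \<in> V" "f v = 2"
  shows "gamma_oidR V E < 2 * sum f V"
proof -
  have "gamma_oidR V E \<le> sum (double_rdf f) V"
    using gamma_oidR_le[OF oidrd_double_rdf[OF assms(2)]] .
  also have "\<dots> < sum (\<lambda>v. 2 * f v) V"
  proof (rule sum_strict_mono_ex1)
    show "\<forall>u\<in>V. double_rdf f u \<le> 2 * f u"
      by (simp add: double_rdf_le)
    show "\<exists>u\<in>V. double_rdf f u < 2 * f u"
      using assms(3) double_rdf_less[of f v, OF assms(4)] by blast
  qed (rule assms(1))
  finally show ?thesis by (simp add: sum_distrib_left)
qed

lemma gamma_oidR_le_twice_gamma_oiR: "gamma_oidR V E \<le> 2 * gamma_oiR V E"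
proof -
  obtain f where "oird V E f" "sum f V = gamma_oiR V E"
    using gamma_oiR_attained by blast
  with gamma_oidR_le_twice_weight show ?thesis
    by metis
qed

lemma oidrd_edgeless_ge_two:
  assumes "oidrd V E g" "\<forall>u v. \<not> E u v" "v \<in> V"
  shows "2 \<le> g v"
proof -
  have "g v \<noteq> 0" "g v \<noteq> 1"
    using assms unfolding oidrd_def drd_def by auto
  then show ?thesis by linarith
qed

lemma gamma_oidR_edgeless:
  assumes "\<forall>u v. \<not> E u v"
  shows "gamma_oidR V E = 2 * gamma_oiR V E"
proof (rule antisym)
  show "gamma_oidR V E \<le> 2 * gamma_oiR V E"
    by (rule gamma_oidR_le_twice_gamma_oiR)
  have "oird V E (\<lambda>_. 1)"
    by (rule oird_const) simp_all
  then have "gamma_oiR V E \<le> sum (\<lambda>_. 1) V"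
    by (rule gamma_oiR_le)
  then have "2 * gamma_oiR V E \<le> 2 * sum (\<lambda>_. 1) V"
    by simp
  also have "\<dots> = sum (\<lambda>_. 2) V"
    by simp
  also have "\<dots> \<le> gamma_oidR V E"
  proof -
    obtain g where g: "oidrd V E g" "sum g V = gamma_oidR V E"
      using gamma_oidR_attained by blast
    have "sum (\<lambda>_. 2) V \<le> sum g V"
      using oidrd_edgeless_ge_two[OF g(1) assms] by (rule sum_mono)
    with g(2) show ?thesis by simp
  qed
  finally show "2 * gamma_oiR V E \<le> gamma_oidR V E" .
qed

lemma sum_fun_upd_add:
  fixes f :: "'a \<Rightarrow> 'b::comm_monoid_add"
  assumes "finite V" "a \<in> V"
  shows "sum (f(a := x)) V + f a = sum f V + x"
proof -
  have "sum (f(a := x)) (V - {a}) = sum f (V - {a})"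
    by (rule sum.cong) auto
  then show ?thesis
    using assms by (simp add: sum.remove add_ac)
qed

lemma oird_without_two_const_one:
  assumes "oird V E f" "\<forall>u\<in>V. f u \<noteq> 2" "v \<in> V"
  shows "f v = 1"
proof -
  have "f v \<le> 2" "f v \<noteq> 0" "f v \<noteq> 2"
    using assms unfolding oird_def rdf_def by auto
  then show ?thesis by linarith
qed

lemma minimum_oird_with_two:
  assumes "simple_graph V E" "E a b"
  shows "\<exists>f. oird V E f \<and> sum f V = gamma_oiR V E \<and> (\<exists>v\<in>V. f v = 2)"
proof -
  have fin: "finite V" and ab: "a \<in> V" "b \<in> V" "a \<noteq> b" "E b a" and loopless: "\<not> E b b"
    using assms unfolding simple_graph_def by metis+
  obtain f where f: "oird V E f" "sum f V = gamma_oiR V E"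
    using gamma_oiR_attained by blast
  show ?thesis
  proof (cases "\<exists>v\<in>V. f v = 2")
    case True
    with f show ?thesis by blast
  next
    case False
    then have one: "\<And>v. v \<in> V \<Longrightarrow> f v = 1"
      using oird_without_two_const_one[OF f(1)] by blast
    define f' where "f' = f(a := 2, b := 0)"
    have f'_a: "f' a = 2"
      using ab(3) unfolding f'_def by simp
    have f'_le: "f' v \<le> 2" if "v \<in> V" for v
      using one[OF that] unfolding f'_def by simp
    have f'_zero: "f' v = 0 \<longleftrightarrow> v = b" if "v \<in> V" for v
      using one[OF that] unfolding f'_def by simp
    have "oird V E f'"
      unfolding oird_def rdf_def zeros_independent_def
      using f'_a f'_le f'_zero ab(1,4) loopless by blast
    moreover have "sum f' V = sum f V"
      using sum_fun_upd_add[OF fin ab(1), of f 2] sum_fun_upd_add[OF fin ab(2), of "f(a := 2)" 0]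
        one[OF ab(1)] one[OF ab(2)] ab(3)
      unfolding f'_def by simp
    ultimately show ?thesis
      using f(2) f'_a ab(1) by (intro exI[of _ f']) auto
  qed
qed

lemma gamma_oidR_less_twice_gamma_oiR:
  assumes "simple_graph V E" "E a b"
  shows "gamma_oidR V E < 2 * gamma_oiR V E"
proof -
  obtain f v where f: "oird V E f" "sum f V = gamma_oiR V E" "v \<in> V" "f v = 2"
    using minimum_oird_with_two[OF assms] by blast
  have "finite V"
    using assms(1) unfolding simple_graph_def by blast
  from gamma_oidR_less_twice_weight[OF this f(1,3,4)] f(2) show ?thesis
    by simp
qed

theorem theorem3:
  fixes V :: "'a set" and E :: "'a \<Rightarrow> 'a \<Rightarrow> bool"
  assumes "simple_graph V E"
  shows "gamma_oidR V E \<le> 2 * gamma_oiR V E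
    \<and> (gamma_oidR V E = 2 * gamma_oiR V E \<longleftrightarrow> (\<forall>u v. \<not> E u v))"
proof (intro conjI iffI)
  show "gamma_oidR V E \<le> 2 * gamma_oiR V E"
    by (rule gamma_oidR_le_twice_gamma_oiR)
  show "\<forall>u v. \<not> E u v" if "gamma_oidR V E = 2 * gamma_oiR V E"
    using that gamma_oidR_less_twice_gamma_oiR[OF assms] by (metis less_irrefl)
  show "gamma_oidR V E = 2 * gamma_oiR V E" if "\<forall>u v. \<not> E u v"
    using that by (rule gamma_oidR_edgeless)
qed

end
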